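(* Let $\mathbb{M}$ be a monster model of $T_{\mathrm{Ham}}$ with underlying set $G_\infty$, and let $I=I_1+(c)+I_2$ be an ordered index set with $I_1,I_2$ infinite. Let $(a_i)_{i\in I}$ be a nonconstant indiscernible sequence from $G$, and let $(b,b')\in G\times v(G)$ be such that $(a_i)_{i\in I_1+I_2}$ is $bb'$-indiscernible. If $v(a_i-b)=b'$ for all $i\neq c$, then $v(a_c-b)=b'$.
   Context: Let $C$ be an ordered field. A Hamel space over $C$ is a $C$-vector space $G$ with two total orderings $<_0,<_1$, each making $G$ an ordered $C$-vector space, and a map $v:G\to G_\infty=G\cup\{\infty\}$ ($G<_0\infty$, $G<_1\infty$) such that for all $x,y\in G$, $\lambda\in C^{\times}$: $v(x)=\infty$ iff $x=0$; $v(x+y)\ge_0\min_0(v(x),v(y))$; $v(\lambda x)=v(x)$; $0<_1x<_1y\Rightarrow v(x)\ge_0v(y)$; $v(v(x))=v(x)$ (with $v(\infty)=\infty$); $v(x)>_10$. It is independent if for all $a_0<_0b_0$, $a_1<_1b_1$ in $G\cup\{\pm\infty\}$ some $z\in G$ has $a_0<_0z<_0b_0$, $a_1<_1z<_1b_1$; dense if for all $a<_0b$ in $G$ some $c$ has $a<_0v(c)<_0b$. $T_{\mathrm{Ham}}$ is the complete theory in the language $\{0,+,(\lambda_c)_{c\in C},<_0,<_1,v,\infty\}$ on universe $G_\infty$ (with $\infty$ absorbing for $+$, $\lambda_c$, $v$) whose models are exactly the independent dense Hamel spaces over $C$. Indiscernible means $\emptyset$-indiscernible; $bb'$-indiscernible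 means indiscernible over $\{b,b'\}$. *)

theory Defs
  imports Complex_Main
begin

text \<open>A Hamel-space signature over an ordered field 'c on a group 'g.
  The extended universe G_infinity is modelled as 'g option, with None = infinity.\<close>

record ('c, 'g) hstruct =
  smul :: "'c \<Rightarrow> 'g \<Rightarrow> 'g"
  lt0  :: "'g \<Rightarrow> 'g \<Rightarrow> bool"
  lt1  :: "'g \<Rightarrow> 'g \<Rightarrow> bool"
  val  :: "'g \<Rightarrow> 'g option"

definition ext_lt :: "('g \<Rightarrow> 'g \<Rightarrow> bool) \<Rightarrow> 'g option \<Rightarrow> 'g option \<Rightarrow> bool" where
  "ext_lt lt x y = (case (x, y) of
      (Some a, Some b) \<Rightarrow> lt a b
    | (Some _, None) \<Rightarrow> True
    | _ \<Rightarrow> False)"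

definition ext_le :: "('g \<Rightarrow> 'g \<Rightarrow> bool) \<Rightarrow> 'g option \<Rightarrow> 'g option \<Rightarrow> bool" where
  "ext_le lt x y = (ext_lt lt x y \<or> x = y)"

definition ext_min :: "('g \<Rightarrow> 'g \<Rightarrow> bool) \<Rightarrow> 'g option \<Rightarrow> 'g option \<Rightarrow> 'g option" where
  "ext_min lt x y = (if ext_le lt x y then x else y)"

definition strict_total :: "('g \<Rightarrow> 'g \<Rightarrow> bool) \<Rightarrow> bool" where
  "strict_total lt = ((\<forall>x. \<not> lt x x) \<and> (\<forall>x y z. lt x y \<longrightarrow> lt y z \<longrightarrow> lt x z)
                       \<and> (\<forall>x y. lt x y \<or> x = y \<or> lt y x))"

definition ordered_vs :: "('c::linordered_field \<Rightarrow> 'g::ab_group_add \<Rightarrow> 'g) \<Rightarrow> ('g \<Rightarrow> 'g \<Rightarrow> bool) \<Rightarrow> bool" where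
  "ordered_vs sm lt = (strict_total lt
     \<and> (\<forall>x y z. lt x y \<longrightarrow> lt (x + z) (y + z))
     \<and> (\<forall>c x y. 0 < c \<longrightarrow> lt x y \<longrightarrow> lt (sm c x) (sm c y)))"

definition hamel_space :: "('c::linordered_field, 'g::ab_group_add) hstruct \<Rightarrow> bool" where
  "hamel_space H = (vector_space (smul H)
     \<and> ordered_vs (smul H) (lt0 H) \<and> ordered_vs (smul H) (lt1 H)
     \<and> (\<forall>x. val H x = None \<longleftrightarrow> x = 0)
     \<and> (\<forall>x y. ext_le (lt0 H) (ext_min (lt0 H) (val H x) (val H y)) (val H (x + y)))
     \<and> (\<forall>c x. c \<noteq> 0 \<longrightarrow> val H (smul H c x) = val H x)
     \<and> (\<forall>x y. lt1 H 0 x \<longrightarrow> lt1 H x y \<longrightarrow> ext_le (lt0 H) (val H y) (val H x))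
     \<and> (\<forall>x. (case val H x of None \<Rightarrow> True | Some y \<Rightarrow> val H y = Some y))
     \<and> (\<forall>x. ext_lt (lt1 H) (Some 0) (val H x)))"

text \<open>Bounds in G with -infinity / +infinity: None stands for the infinite bound.\<close>
definition above :: "('g \<Rightarrow> 'g \<Rightarrow> bool) \<Rightarrow> 'g option \<Rightarrow> 'g \<Rightarrow> bool" where
  "above lt a z = (case a of None \<Rightarrow> True | Some a' \<Rightarrow> lt a' z)"
definition below :: "('g \<Rightarrow> 'g \<Rightarrow> bool) \<Rightarrow> 'g \<Rightarrow> 'g option \<Rightarrow> bool" where
  "below lt z b = (case b of None \<Rightarrow> True | Some b' \<Rightarrow> lt z b')"
definition bounds_ok :: "('g \<Rightarrow> 'g \<Rightarrow> bool) \<Rightarrow> 'g option \<Rightarrow> 'g option \<Rightarrow> bool" where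
  "bounds_ok lt a b = (case (a, b) of (Some a', Some b') \<Rightarrow> lt a' b' | _ \<Rightarrow> True)"

definition independent :: "('c, 'g) hstruct \<Rightarrow> bool" where
  "independent H = (\<forall>a0 b0 a1 b1. bounds_ok (lt0 H) a0 b0 \<longrightarrow> bounds_ok (lt1 H) a1 b1 \<longrightarrow>
      (\<exists>z. above (lt0 H) a0 z \<and> below (lt0 H) z b0 \<and> above (lt1 H) a1 z \<and> below (lt1 H) z b1))"

definition dense :: "('c, 'g) hstruct \<Rightarrow> bool" where
  "dense H = (\<forall>a b. lt0 H a b \<longrightarrow>
      (\<exists>c. ext_lt (lt0 H) (Some a) (val H c) \<and> ext_lt (lt0 H) (val H c) (Some b)))"

definition model_Tham :: "('c::linordered_field, 'g::ab_group_add) hstruct \<Rightarrow> bool" where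
  "model_Tham H = (hamel_space H \<and> independent H \<and> dense H)"

datatype ('c, 'g) trm =
    Var nat | Zero | Infty | Plus "('c, 'g) trm" "('c, 'g) trm"
  | Scal 'c "('c, 'g) trm" | Vt "('c, 'g) trm" | Par "'g option"

datatype ('c, 'g) fml =
    Eq "('c, 'g) trm" "('c, 'g) trm" | Less0 "('c, 'g) trm" "('c, 'g) trm"
  | Less1 "('c, 'g) trm" "('c, 'g) trm"
  | Neg "('c, 'g) fml" | Conj "('c, 'g) fml" "('c, 'g) fml" | Ex nat "('c, 'g) fml"

primrec tparams :: "('c, 'g) trm \<Rightarrow> 'g option set" where
  "tparams (Var k) = {}" | "tparams Zero = {}" | "tparams Infty = {}"
| "tparams (Plus s t) = tparams s \<union> tparams t" | "tparams (Scal c t) = tparams t"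
| "tparams (Vt t) = tparams t" | "tparams (Par p) = {p}"

primrec params :: "('c, 'g) fml \<Rightarrow> 'g option set" where
  "params (Eq s t) = tparams s \<union> tparams t" | "params (Less0 s t) = tparams s \<union> tparams t"
| "params (Less1 s t) = tparams s \<union> tparams t" | "params (Neg f) = params f"
| "params (Conj f g) = params f \<union> params g" | "params (Ex k f) = params f"

primrec teval :: "('c, 'g::ab_group_add) hstruct \<Rightarrow> (nat \<Rightarrow> 'g option) \<Rightarrow> ('c, 'g) trm \<Rightarrow> 'g option" where
  "teval H e (Var k) = e k" | "teval H e Zero = Some 0" | "teval H e Infty = None"
| "teval H e (Plus s t) = (case (teval H e s, teval H e t) of (Some x, Some y) \<Rightarrow> Some (x + y) | _ \<Rightarrow> None)"
| "teval H e (Scal c t) = map_option (smul H c) (teval H e t)"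
| "teval H e (Vt t) = (case teval H e t of None \<Rightarrow> None | Some x \<Rightarrow> val H x)"
| "teval H e (Par p) = p"

primrec sat :: "('c, 'g::ab_group_add) hstruct \<Rightarrow> (nat \<Rightarrow> 'g option) \<Rightarrow> ('c, 'g) fml \<Rightarrow> bool" where
  "sat H e (Eq s t) = (teval H e s = teval H e t)"
| "sat H e (Less0 s t) = ext_lt (lt0 H) (teval H e s) (teval H e t)"
| "sat H e (Less1 s t) = ext_lt (lt1 H) (teval H e s) (teval H e t)"
| "sat H e (Neg f) = (\<not> sat H e f)"
| "sat H e (Conj f g) = (sat H e f \<and> sat H e g)"
| "sat H e (Ex k f) = (\<exists>x. sat H (e(k := x)) f)"

definition tup :: "('i \<Rightarrow> 'g) \<Rightarrow> 'i list \<Rightarrow> nat \<Rightarrow> 'g option" where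
  "tup a is k = (if k < length is then Some (a (is ! k)) else None)"

definition indiscernible_over :: "('c, 'g::ab_group_add) hstruct \<Rightarrow> 'g option set
     \<Rightarrow> ('i::linorder) set \<Rightarrow> ('i \<Rightarrow> 'g) \<Rightarrow> bool" where
  "indiscernible_over H A S a = (\<forall>f is js. params f \<subseteq> A
      \<longrightarrow> sorted_wrt (<) is \<longrightarrow> sorted_wrt (<) js \<longrightarrow> length is = length js
      \<longrightarrow> set is \<subseteq> S \<longrightarrow> set js \<subseteq> S
      \<longrightarrow> (sat H (tup a is) f \<longleftrightarrow> sat H (tup a js) f))"

end

theory Submission
  imports Defs
begin

(* Let U = v(a_c - b). If U < b', the ultrametric inequality gives
   v(a_i - a_c) = v(a_c - a_j) = U for i < c < j, while v(a_j - a_k) >= b' > U for c < j < k,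
   so the triples (i, c, j) and (c, j, k) disagree on the formula v(x0 - x1) = v(x1 - x2).
   If U > b', then v(a_l - a_c) = b' < v(a_c - b) for every l ~= c, so b lies on the same
   <_1-side of each a_l as a_c does. By indiscernibility a_c lies strictly between a_i and a_j
   for i < c < j, hence so does b, and a_i, a_j disagree on the formula x0 <_1 b. *)

lemma
  assumes "strict_total lt"
  shows ext_lt_irrefl: "\<not> ext_lt lt x x"
    and ext_lt_trans: "ext_lt lt x y \<Longrightarrow> ext_lt lt y z \<Longrightarrow> ext_lt lt x z"
    and ext_lt_total: "ext_lt lt x y \<or> x = y \<or> ext_lt lt y x"
  using assms unfolding strict_total_def ext_lt_def by (auto split: option.splits)

lemma ext_le_iff_not_ext_lt:
  assumes "strict_total lt"
  shows "ext_le lt x y \<longleftrightarrow> \<not> ext_lt lt y x"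
  using ext_lt_irrefl[OF assms] ext_lt_trans[OF assms] ext_lt_total[OF assms]
  unfolding ext_le_def by blast

lemma ext_lt_le_trans:
  assumes "strict_total lt" "ext_lt lt x y" "ext_le lt y z"
  shows "ext_lt lt x z"
  using assms ext_lt_trans unfolding ext_le_def by blast

lemma ext_le_trans:
  assumes "strict_total lt" "ext_le lt x y" "ext_le lt y z"
  shows "ext_le lt x z"
  using assms ext_lt_trans unfolding ext_le_def by blast

lemma ext_min_cases: "ext_min lt x y = x \<or> ext_min lt x y = y"
  unfolding ext_min_def by simp

lemma indiscernible_overD:
  assumes "indiscernible_over H A S a" "params f \<subseteq> A"
    and "sorted_wrt (<) is" "sorted_wrt (<) js" "length is = length js"
    and "set is \<subseteq> S" "set js \<subseteq> S"
  shows "sat H (tup a is) f \<longleftrightarrow> sat H (tup a js) f"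
  using assms unfolding indiscernible_over_def by blast

lemma indiscernible_lt1:
  assumes "indiscernible_over H A S a" "i < j" "k < l" "{i, j, k, l} \<subseteq> S"
  shows "lt1 H (a i) (a j) \<longleftrightarrow> lt1 H (a k) (a l)"
proof -
  let ?f = "Less1 (Var 0) (Var 1)"
  have "sat H (tup a [i, j]) ?f \<longleftrightarrow> sat H (tup a [k, l]) ?f"
    by (rule indiscernible_overD[OF assms(1)]) (use assms in auto)
  then show ?thesis by (simp add: tup_def ext_lt_def)
qed

lemma indiscernible_lt1_param:
  assumes "indiscernible_over H A S a" "Some b \<in> A" "i \<in> S" "j \<in> S"
  shows "lt1 H (a i) b \<longleftrightarrow> lt1 H (a j) b"
proof -
  let ?f = "Less1 (Var 0) (Par (Some b))"
  have "sat H (tup a [i]) ?f \<longleftrightarrow> sat H (tup a [j]) ?f"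
    by (rule indiscernible_overD[OF assms(1)]) (use assms in auto)
  then show ?thesis by (simp add: tup_def ext_lt_def)
qed

lemma obtain_less_in_infinite:
  fixes S :: "'a::linorder set"
  assumes "infinite S"
  obtains j k where "j \<in> S" "k \<in> S" "j < k"
proof -
  obtain j where j: "j \<in> S" using assms infinite_imp_nonempty by blast
  have "infinite (S - {j})" using assms by simp
  then obtain k where "k \<in> S - {j}" using infinite_imp_nonempty by blast
  with j show thesis using that by (metis DiffE linorder_neqE singletonI)
qed

locale hamel =
  fixes H :: "('c::linordered_field, 'g::ab_group_add) hstruct"
  assumes hamel_space: "hamel_space H"
begin

lemma strict_total_lt0: "strict_total (lt0 H)"
  and strict_total_lt1: "strict_total (lt1 H)"
  and lt1_add_right: "lt1 H x y \<Longrightarrow> lt1 H (x + z) (y + z)"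
  using hamel_space unfolding hamel_space_def ordered_vs_def by blast+

lemma smul_minus_one: "smul H (-1) x = - x"
proof -
  interpret vector_space "smul H" using hamel_space unfolding hamel_space_def by blast
  show ?thesis by simp
qed

lemma val_eq_None_iff: "val H x = None \<longleftrightarrow> x = 0"
  using hamel_space unfolding hamel_space_def by auto

lemma val_zero [simp]: "val H 0 = None"
  by (simp add: val_eq_None_iff)

lemma val_uminus: "val H (- x) = val H x"
  using hamel_space smul_minus_one unfolding hamel_space_def
  by (metis neg_equal_0_iff_equal zero_neq_one)

lemma val_diff_commute: "val H (x - y) = val H (y - x)"
  by (metis minus_diff_eq val_uminus)

lemma val_antimono:
  assumes "lt1 H 0 x" "lt1 H x y"
  shows "ext_le (lt0 H) (val H y) (val H x)"
  using hamel_space assms unfolding hamel_space_def by blast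

lemma val_add_ge:
  assumes "ext_le (lt0 H) p (val H x)" "ext_le (lt0 H) p (val H y)"
  shows "ext_le (lt0 H) p (val H (x + y))"
proof -
  have "ext_le (lt0 H) (ext_min (lt0 H) (val H x) (val H y)) (val H (x + y))"
    using hamel_space unfolding hamel_space_def by blast
  then show ?thesis
    using assms ext_min_cases ext_le_trans[OF strict_total_lt0] by metis
qed

lemma val_add_gt:
  assumes "ext_lt (lt0 H) p (val H x)" "ext_lt (lt0 H) p (val H y)"
  shows "ext_lt (lt0 H) p (val H (x + y))"
proof -
  have "ext_le (lt0 H) (ext_min (lt0 H) (val H x) (val H y)) (val H (x + y))"
    using hamel_space unfolding hamel_space_def by blast
  then show ?thesis
    using assms ext_min_cases ext_lt_le_trans[OF strict_total_lt0] by metis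
qed

lemma val_add_eq_left:
  assumes "ext_lt (lt0 H) (val H x) (val H y)"
  shows "val H (x + y) = val H x"
proof (rule ccontr)
  assume "val H (x + y) \<noteq> val H x"
  moreover have "ext_le (lt0 H) (val H x) (val H (x + y))"
    using assms by (intro val_add_ge) (auto simp: ext_le_def)
  ultimately have "ext_lt (lt0 H) (val H x) (val H (x + y + - y))"
    using val_add_gt[of "val H x" "x + y" "- y"] assms by (auto simp: ext_le_def val_uminus)
  then show False using ext_lt_irrefl[OF strict_total_lt0] by simp
qed

lemma val_diff_eq:
  assumes "ext_lt (lt0 H) (val H (x - z)) (val H (y - z))"
  shows "val H (x - y) = val H (x - z)"
proof -
  have "val H ((x - z) + (z - y)) = val H (x - z)"
    using assms by (intro val_add_eq_left) (simp add: val_diff_commute)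
  then show ?thesis by simp
qed

lemma val_diff_ge:
  assumes "ext_le (lt0 H) p (val H (x - z))" "ext_le (lt0 H) p (val H (y - z))"
  shows "ext_le (lt0 H) p (val H (x - y))"
  using val_add_ge[of p "x - z" "z - y"] assms by (simp add: val_diff_commute)

lemma lt1_add_right_iff: "lt1 H (x + z) (y + z) \<longleftrightarrow> lt1 H x y"
  by (metis add_diff_cancel_right' diff_conv_add_uminus lt1_add_right)

lemma lt1_0_diff_iff: "lt1 H 0 (x - y) \<longleftrightarrow> lt1 H y x"
  using lt1_add_right_iff[of 0 y "x - y"] by simp

lemma lt1_0_add:
  assumes "lt1 H 0 d" "ext_lt (lt0 H) (val H d) (val H e)"
  shows "lt1 H 0 (d + e)"
proof (rule ccontr)
  assume "\<not> lt1 H 0 (d + e)"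
  then have "d + e = 0 \<or> lt1 H (d + e) 0"
    using strict_total_lt1 unfolding strict_total_def by blast
  then have "d = - e \<or> lt1 H d (- e)"
    by (metis add_eq_0_iff2 add_diff_cancel_right' add_0 diff_conv_add_uminus lt1_add_right)
  then have "ext_le (lt0 H) (val H e) (val H d)"
    using val_antimono[OF assms(1), of "- e"] val_uminus[of e] by (auto simp: ext_le_def)
  then show False
    using assms(2) ext_le_iff_not_ext_lt[OF strict_total_lt0] by blast
qed

lemma lt1_same_side:
  assumes "ext_lt (lt0 H) (val H (x - y)) (val H (y - z))"
  shows "lt1 H y x \<longleftrightarrow> lt1 H z x" and "lt1 H x y \<longleftrightarrow> lt1 H x z"
proof -
  have "x \<noteq> y" using assms by (auto simp: ext_lt_def)
  have above: "lt1 H z x" if "lt1 H y x"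
    using lt1_0_add[of "x - y" "y - z"] that assms by (simp add: lt1_0_diff_iff)
  have below: "lt1 H x z" if "lt1 H x y"
    using lt1_0_add[of "y - x" "z - y"] that assms by (simp add: lt1_0_diff_iff val_diff_commute)
  have "\<not> lt1 H u u" "lt1 H u v \<Longrightarrow> \<not> lt1 H v u"
    "u \<noteq> v \<Longrightarrow> lt1 H u v \<or> lt1 H v u" for u v
    using strict_total_lt1 unfolding strict_total_def by blast+
  with \<open>x \<noteq> y\<close> above below
  show "lt1 H y x \<longleftrightarrow> lt1 H z x" and "lt1 H x y \<longleftrightarrow> lt1 H x z"
    by metis+
qed

lemma indiscernible_val_diff_eq:
  assumes "indiscernible_over H A S a"
    and "i1 < i2" "i2 < i3" "j1 < j2" "j2 < j3" "{i1, i2, i3, j1, j2, j3} \<subseteq> S"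
  shows "val H (a i1 - a i2) = val H (a i2 - a i3) \<longleftrightarrow>
         val H (a j1 - a j2) = val H (a j2 - a j3)"
proof -
  let ?f = "Eq (Vt (Plus (Var 0) (Scal (-1) (Var 1)))) (Vt (Plus (Var 1) (Scal (-1) (Var 2))))"
  have "sat H (tup a [i1, i2, i3]) ?f \<longleftrightarrow> sat H (tup a [j1, j2, j3]) ?f"
    by (rule indiscernible_overD[OF assms(1)]) (use assms in auto)
  then show ?thesis by (simp add: tup_def smul_minus_one)
qed

lemma val_diff_not_less:
  assumes "indiscernible_over H A UNIV a" "i < c" "c < j" "j < k"
    and "val H (a i - b) = w" "val H (a j - b) = w" "val H (a k - b) = w"
  shows "\<not> ext_lt (lt0 H) (val H (a c - b)) w"
proof
  assume less: "ext_lt (lt0 H) (val H (a c - b)) w"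
  have "val H (a i - a c) = val H (a c - b)"
    using val_diff_eq[of "a c" b "a i"] less assms(5) by (simp add: val_diff_commute)
  moreover have cj: "val H (a c - a j) = val H (a c - b)"
    using val_diff_eq[of "a c" b "a j"] less assms(6) by simp
  ultimately have "val H (a c - a j) = val H (a j - a k)"
    using indiscernible_val_diff_eq[OF assms(1), of i c j c j k] assms(2-4) by simp
  moreover have "ext_le (lt0 H) w (val H (a j - a k))"
    using val_diff_ge[of w "a j" b "a k"] assms(6,7) by (simp add: ext_le_def)
  ultimately show False
    using less cj ext_le_iff_not_ext_lt[OF strict_total_lt0] by metis
qed

lemma val_diff_not_greater:
  assumes "indiscernible_over H A UNIV a" "indiscernible_over H B S a" "Some b \<in> B"
    and "i < c" "c < j" "i \<in> S" "j \<in> S"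
    and "val H (a i - b) = w" "val H (a j - b) = w"
  shows "\<not> ext_lt (lt0 H) w (val H (a c - b))"
proof
  assume greater: "ext_lt (lt0 H) w (val H (a c - b))"
  have side: "a l \<noteq> a c" "lt1 H (a c) (a l) \<longleftrightarrow> lt1 H b (a l)"
    "lt1 H (a l) (a c) \<longleftrightarrow> lt1 H (a l) b"
    if "val H (a l - b) = w" for l
  proof -
    have lc: "val H (a l - a c) = w"
      using val_diff_eq[of "a l" b "a c"] that greater by simp
    moreover have "w \<noteq> None"
      using greater by (cases w) (auto simp: ext_lt_def)
    ultimately show "a l \<noteq> a c"
      using val_eq_None_iff by force
    show "lt1 H (a c) (a l) \<longleftrightarrow> lt1 H b (a l)"
      and "lt1 H (a l) (a c) \<longleftrightarrow> lt1 H (a l) b"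
      using lt1_same_side[of "a l" "a c" b] greater lc by simp_all
  qed
  have "lt1 H (a i) (a c) \<longleftrightarrow> lt1 H (a c) (a j)"
    using indiscernible_lt1[OF assms(1)] assms(4,5) by blast
  moreover have "lt1 H (a i) b \<longleftrightarrow> lt1 H (a j) b"
    using indiscernible_lt1_param[OF assms(2,3,6,7)] .
  ultimately show False
    using side[OF assms(8)] side[OF assms(9)] strict_total_lt1 unfolding strict_total_def
    by metis
qed

end

theorem lemma5p4:
  fixes H :: "('c::linordered_field, 'g::ab_group_add) hstruct"
    and a :: "'i::linorder \<Rightarrow> 'g" and c :: 'i and b :: 'g and b' :: "'g option"
  assumes "model_Tham H"
    and "infinite {i. i < c}" and "infinite {i. c < i}"
    and "\<exists>i j. a i \<noteq> a j"
    and "indiscernible_over H {} UNIV a"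
    and "b' \<in> range (val H)"
    and "indiscernible_over H {Some b, b'} (UNIV - {c}) a"
    and "\<forall>i. i \<noteq> c \<longrightarrow> val H (a i - b) = b'"
  shows "val H (a c - b) = b'"
proof -
  interpret hamel H
    using assms(1) by unfold_locales (simp add: model_Tham_def)
  obtain i where "i < c"
    using assms(2) infinite_imp_nonempty by blast
  obtain j k where "c < j" "c < k" "j < k"
    using obtain_less_in_infinite[OF assms(3)] by blast
  have "\<not> ext_lt (lt0 H) (val H (a c - b)) b'"
    using val_diff_not_less[OF assms(5) \<open>i < c\<close> \<open>c < j\<close> \<open>j < k\<close>, where b = b and w = b']
      assms(8) \<open>i < c\<close> \<open>c < j\<close> \<open>c < k\<close> by simp
  moreover have "\<not> ext_lt (lt0 H) b' (val H (a c - b))"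
    using val_diff_not_greater[OF assms(5,7) _ \<open>i < c\<close> \<open>c < j\<close>, where w = b']
      assms(8) \<open>i < c\<close> \<open>c < j\<close> by simp
  ultimately show ?thesis
    using ext_lt_total[OF strict_total_lt0] by blast
qed

end
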